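(* For a distributed storage system $\mathcal{D}(n,k,d)$ with node storage capacity $\alpha$ and repair bandwidth $\gamma=d\beta$, in the presence of an adversary that can eavesdrop on any $\ell<k$ nodes and control a subset of $b\le \ell$ of these nodes, the resiliency capacity satisfies \[ C_r(\alpha,\gamma)\le\sum_{i=b+1}^{k}\min\{(d-i+1)\beta,\ \alpha\}. \]
   Context: A distributed storage system (DSS) $\mathcal{D}(n,k,d)$, $k\le d\le n-1$: a source stores a file on $n$ storage nodes, each storing at most $\alpha$ symbols. Nodes fail one at a time; each failed node is replaced by a new node that connects to some $d$ of the remaining $n-1$ active nodes and downloads $\beta=\gamma/d$ symbols from each (symmetric repair), then stores at most $\alpha$ symbols. A data collector connects to any $k$ simultaneously active nodes and must recover the file from their stored contents. A limited-knowledge adversary knows the storage/repair/decoding schemes, chooses (possibly at different times) $\ell$ nodes among all nodes ever in the system on which it eavesdrops (observing everything they download and store), and controls a subset of $b\le\ell$ of them: for a controlled node it may arbitrarily alter the stored data and the messages that node sends during repair and to data collectors. Its knowledge of the file is only what it can infer from its observations. The resiliency capacity $C_r(\alpha,\gamma)$ is the maximum file size that can be stored so that every data collector, for any failure/repair sequence, recovers the file reliably (with probability of decoding error that can be made arbitrarily small) against any such adversary. *)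

theory Defs
  imports "HOL-Probability.Probability" "HOL-Library.Extended_Nat"
begin

text \<open>
Symbols are elements of a finite alphabet Sigma (a set of naturals with at least two
elements).  Storage slots are 0..<n.  Nodes ever in the system are identified by
their creation index: the initial nodes are 0..<n (node i initially in slot i), the
newcomer created by the j-th repair (j counted from 0) is node n+j.
A repair event is a pair (f, H): the node in slot f fails and is replaced by a
newcomer that downloads beta symbols from each of the d helper slots listed in H.
\<close>

type_synonym event = "nat \<times> nat list"
type_synonym obs_log = "(nat \<times> nat list list) list"
type_synonym dss_state = "(nat \<Rightarrow> nat list) \<times> (nat \<Rightarrow> nat) \<times> obs_log"

text \<open>Every call uses fresh
independent randomness.  enc: file to the joint contents of the n initial nodes;
rmsg: (schedule so far, helper slot, helper content) to the message sent;
rstore: (schedule so far, received messages) to the stored content;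
dec: (schedule, collector slots, collected contents) to the file estimate.\<close>
record dss_scheme =
  enc :: "nat list \<Rightarrow> (nat \<Rightarrow> nat list) pmf"
  rmsg :: "event list \<Rightarrow> nat \<Rightarrow> nat list \<Rightarrow> nat list pmf"
  rstore :: "event list \<Rightarrow> nat list list \<Rightarrow> nat list pmf"
  dec :: "event list \<Rightarrow> nat list \<Rightarrow> nat list list \<Rightarrow> nat list pmf"

text \<open>Adversary: eavesdropped nodes eav, controlled nodes ctl; the messages sent by
controlled nodes (in repair step j from helper slot h) and the contents they hand to a
data collector are arbitrary functions of the adversary's observations so far
(the log of everything downloaded and stored by eavesdropped nodes).\<close>
record adversary =
  eav :: "nat set"
  ctl :: "nat set"
  amsg :: "nat \<Rightarrow> nat \<Rightarrow> obs_log \<Rightarrow> nat list"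
  acol :: "nat \<Rightarrow> obs_log \<Rightarrow> nat list"

primrec pmf_seq :: "'a pmf list \<Rightarrow> 'a list pmf" where
  "pmf_seq [] = return_pmf []"
| "pmf_seq (p # ps) = bind_pmf p (\<lambda>x. map_pmf (\<lambda>xs. x # xs) (pmf_seq ps))"

definition init_state :: "dss_scheme \<Rightarrow> adversary \<Rightarrow> nat \<Rightarrow> nat list \<Rightarrow> dss_state pmf" where
  "init_state S A n w =
     map_pmf (\<lambda>c. (c, id, map (\<lambda>i. (i, [c i])) (filter (\<lambda>i. i \<in> eav A) [0..<n]))) (enc S w)"

definition helper_msg ::
  "dss_scheme \<Rightarrow> adversary \<Rightarrow> event list \<Rightarrow> nat \<Rightarrow> dss_state \<Rightarrow> nat \<Rightarrow> nat list pmf" where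
  "helper_msg S A sched j st h = (case st of (c, occ, lg) \<Rightarrow>
     if occ h \<in> ctl A then return_pmf (amsg A j h lg)
     else rmsg S (take (Suc j) sched) h (c (occ h)))"

definition repair_step ::
  "dss_scheme \<Rightarrow> adversary \<Rightarrow> nat \<Rightarrow> event list \<Rightarrow> nat \<Rightarrow> dss_state \<Rightarrow> dss_state pmf" where
  "repair_step S A n sched j st = (case st of (c, occ, lg) \<Rightarrow>
     bind_pmf (pmf_seq (map (helper_msg S A sched j st) (snd (sched ! j)))) (\<lambda>ms.
       map_pmf (\<lambda>s. (c(n + j := s), occ(fst (sched ! j) := n + j),
                      if n + j \<in> eav A then lg @ [(n + j, ms @ [s])] else lg))
         (rstore S (take (Suc j) sched) ms)))"

definition run_dss ::
  "dss_scheme \<Rightarrow> adversary \<Rightarrow> nat \<Rightarrow> event list \<Rightarrow> nat list \<Rightarrow> dss_state pmf" where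
  "run_dss S A n sched w =
     foldl (\<lambda>P j. bind_pmf P (repair_step S A n sched j)) (init_state S A n w) [0..<length sched]"

definition collected :: "adversary \<Rightarrow> nat list \<Rightarrow> dss_state \<Rightarrow> nat list list" where
  "collected A K st = (case st of (c, occ, lg) \<Rightarrow>
     map (\<lambda>h. if occ h \<in> ctl A then acol A h lg else c (occ h)) K)"

definition error_prob ::
  "dss_scheme \<Rightarrow> adversary \<Rightarrow> nat \<Rightarrow> nat set \<Rightarrow> nat \<Rightarrow> event list \<Rightarrow> nat list \<Rightarrow> real" where
  "error_prob S A n \<Sigma> B sched K =
     measure_pmf.prob
       (bind_pmf (pmf_of_set {w. set w \<subseteq> \<Sigma> \<and> length w = B}) (\<lambda>w.
        bind_pmf (run_dss S A n sched w) (\<lambda>st.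
        map_pmf (\<lambda>est. est \<noteq> w) (dec S sched K (collected A K st))))) {True}"

definition valid_scheme :: "nat \<Rightarrow> nat \<Rightarrow> nat \<Rightarrow> nat set \<Rightarrow> dss_scheme \<Rightarrow> bool" where
  "valid_scheme n \<alpha> \<beta> \<Sigma> S \<longleftrightarrow>
     (\<forall>w. \<forall>c \<in> set_pmf (enc S w). \<forall>i<n. set (c i) \<subseteq> \<Sigma> \<and> length (c i) = \<alpha>) \<and>
     (\<forall>pre h x. \<forall>m \<in> set_pmf (rmsg S pre h x). set m \<subseteq> \<Sigma> \<and> length m = \<beta>) \<and>
     (\<forall>pre ms. \<forall>s \<in> set_pmf (rstore S pre ms). set s \<subseteq> \<Sigma> \<and> length s = \<alpha>)"

definition valid_schedule :: "nat \<Rightarrow> nat \<Rightarrow> event list \<Rightarrow> bool" where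
  "valid_schedule n d sched \<longleftrightarrow>
     (\<forall>(f, H) \<in> set sched. f < n \<and> distinct H \<and> length H = d \<and> set H \<subseteq> {0..<n} - {f})"

definition valid_collector :: "nat \<Rightarrow> nat \<Rightarrow> nat list \<Rightarrow> bool" where
  "valid_collector n k K \<longleftrightarrow> distinct K \<and> length K = k \<and> set K \<subseteq> {0..<n}"

definition valid_adversary ::
  "nat \<Rightarrow> nat \<Rightarrow> nat \<Rightarrow> nat \<Rightarrow> nat set \<Rightarrow> adversary \<Rightarrow> bool" where
  "valid_adversary l b \<alpha> \<beta> \<Sigma> A \<longleftrightarrow>
     finite (eav A) \<and> card (eav A) \<le> l \<and> ctl A \<subseteq> eav A \<and> card (ctl A) \<le> b \<and>
     (\<forall>j h lg. set (amsg A j h lg) \<subseteq> \<Sigma> \<and> length (amsg A j h lg) = \<beta>) \<and>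
     (\<forall>h lg. set (acol A h lg) \<subseteq> \<Sigma> \<and> length (acol A h lg) = \<alpha>)"

definition resilient_achievable ::
  "nat \<Rightarrow> nat \<Rightarrow> nat \<Rightarrow> nat \<Rightarrow> nat \<Rightarrow> nat \<Rightarrow> nat \<Rightarrow> nat \<Rightarrow> bool" where
  "resilient_achievable n k d l b \<alpha> \<beta> B \<longleftrightarrow>
     (\<forall>\<epsilon>>0. \<exists>\<Sigma> S. finite \<Sigma> \<and> 2 \<le> card \<Sigma> \<and> valid_scheme n \<alpha> \<beta> \<Sigma> S \<and>
        (\<forall>sched K A. valid_schedule n d sched \<longrightarrow> valid_collector n k K \<longrightarrow>
            valid_adversary l b \<alpha> \<beta> \<Sigma> A \<longrightarrow> error_prob S A n \<Sigma> B sched K \<le> \<epsilon>))"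

definition resiliency_capacity ::
  "nat \<Rightarrow> nat \<Rightarrow> nat \<Rightarrow> nat \<Rightarrow> nat \<Rightarrow> nat \<Rightarrow> nat \<Rightarrow> enat" where
  "resiliency_capacity n k d l b \<alpha> \<beta> = Sup (enat ` {B. resilient_achievable n k d l b \<alpha> \<beta> B})"

end

theory Submission
  imports Defs
begin

text \<open>
  Split the sum at the first index i0 \<ge> b from which the repair-bandwidth terms
  (d-i)*beta no longer exceed alpha.  The attack behind the bound: the adversary
  controls the b initial nodes 0..<b and makes them hand out a fixed constant symbol
  string, so they carry no information.  Nodes b..<i0 stay untouched, and the slots
  i0, ..., k-1 fail one after the other; the j-th newcomer downloads from the
  previously considered slots 0..<i0+j and from d-(i0+j) slots outside the collector.
  A data collector connecting to the slots 0..<k then sees a randomised function of a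
  transcript consisting of the contents of nodes b..<i0 and of the messages sent by
  the outside helpers; there are only |Sigma|^C such transcripts, C the right-hand
  side of the bound.  A counting (Fano-type) argument shows that guessing a uniform
  file of B symbols from such a view fails with probability at least
  1 - |Sigma|^C / |Sigma|^B, which is at least 1/2 when B > C, so no B > C is
  resiliently achievable.
\<close>

section \<open>Guessing through a channel with few intermediate values\<close>

text \<open>If every input w is first mapped into a finite set T of intermediate values,
  then the total probability of reproducing the input, summed over all inputs, is at
  most |T|: each intermediate value accounts for at most probability one.\<close>
lemma guessing_mass_bound:
  fixes P :: "'w \<Rightarrow> 't pmf" and G :: "'t \<Rightarrow> 'w pmf"
  assumes N: "finite N" and T: "finite T" and supp: "\<And>w. w \<in> N \<Longrightarrow> set_pmf (P w) \<subseteq> T"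
  shows "(\<Sum>w\<in>N. pmf (bind_pmf (P w) G) w) \<le> real (card T)"
proof -
  have "(\<Sum>w\<in>N. pmf (bind_pmf (P w) G) w) \<le> (\<Sum>w\<in>N. \<Sum>t\<in>T. pmf (G t) w)"
  proof (rule sum_mono)
    fix w assume w: "w \<in> N"
    have "pmf (bind_pmf (P w) G) w = (\<integral>t. pmf (G t) w \<partial>measure_pmf (P w))" by (rule pmf_bind)
    also have "\<dots> = (\<Sum>t\<in>T. pmf (P w) t *\<^sub>R pmf (G t) w)"
      using supp[OF w] by (intro integral_measure_pmf[OF T]) auto
    also have "\<dots> \<le> (\<Sum>t\<in>T. pmf (G t) w)"
      by (intro sum_mono) (simp add: mult_left_le_one_le pmf_le_1)
    finally show "pmf (bind_pmf (P w) G) w \<le> (\<Sum>t\<in>T. pmf (G t) w)" .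
  qed
  also have "\<dots> = (\<Sum>t\<in>T. \<Sum>w\<in>N. pmf (G t) w)" by (rule sum.swap)
  also have "\<dots> \<le> (\<Sum>t\<in>T. 1)"
  proof (rule sum_mono)
    fix t
    have "(\<Sum>w\<in>N. pmf (G t) w) = measure_pmf.prob (G t) N"
      using N by (simp add: measure_measure_pmf_finite)
    then show "(\<Sum>w\<in>N. pmf (G t) w) \<le> 1" by simp
  qed
  finally show ?thesis by simp
qed

lemma guessing_error_lower_bound:
  fixes P :: "'w \<Rightarrow> 't pmf" and Q :: "'t \<Rightarrow> 'v pmf" and dec :: "'v \<Rightarrow> 'w pmf"
  assumes N: "finite N" "N \<noteq> {}" and T: "finite T"
    and supp: "\<And>w. w \<in> N \<Longrightarrow> set_pmf (P w) \<subseteq> T"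
    and view: "\<And>w. w \<in> N \<Longrightarrow> D w = bind_pmf (P w) Q"
  shows "1 - real (card T) / real (card N) \<le> measure_pmf.prob
           (bind_pmf (pmf_of_set N) (\<lambda>w. bind_pmf (D w) (\<lambda>v. map_pmf (\<lambda>e. e \<noteq> w) (dec v)))) {True}"
proof -
  define err where "err = (\<lambda>w. bind_pmf (D w) (\<lambda>v. map_pmf (\<lambda>e. e \<noteq> w) (dec v)))"
  define hit where "hit = (\<lambda>w. pmf (bind_pmf (P w) (\<lambda>t. bind_pmf (Q t) dec)) w)"
  have success: "pmf (err w) False = hit w" if w: "w \<in> N" for w
  proof -
    have "err w = map_pmf (\<lambda>e. e \<noteq> w) (bind_pmf (P w) (\<lambda>t. bind_pmf (Q t) dec))"
      by (simp add: err_def view[OF w] map_bind_pmf bind_assoc_pmf)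
    moreover have "(\<lambda>e. e \<noteq> w) -` {False} = {w}" by auto
    ultimately show ?thesis by (simp add: hit_def pmf_map measure_pmf_single)
  qed
  have failure: "pmf (err w) True = 1 - pmf (err w) False" for w
  proof -
    have "sum (pmf (err w)) {True, False} = 1" by (rule sum_pmf_eq_1) auto
    then show ?thesis by simp
  qed
  have cN: "0 < card N" using N by (simp add: card_gt_0_iff)
  have "measure_pmf.prob (bind_pmf (pmf_of_set N) err) {True} = (\<Sum>w\<in>N. pmf (err w) True) / card N"
    using N by (simp add: measure_pmf_single pmf_bind integral_pmf_of_set)
  also have "\<dots> = (card N - (\<Sum>w\<in>N. hit w)) / card N"
    by (simp add: failure success sum_subtractf)
  also have "\<dots> \<ge> (card N - real (card T)) / card N"
    using guessing_mass_bound[OF N(1) T supp] cN by (intro divide_right_mono) (auto simp: hit_def)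
  finally show ?thesis
    using cN by (simp add: err_def diff_divide_distrib)
qed

abbreviation dep_lists :: "(nat \<Rightarrow> 'a set) \<Rightarrow> nat \<Rightarrow> 'a list set" where
  "dep_lists F m \<equiv> {xs. length xs = m \<and> (\<forall>j<m. xs ! j \<in> F j)}"

lemma dep_lists_snoc:
  "dep_lists F (Suc m) = (\<lambda>(xs, x). xs @ [x]) ` (dep_lists F m \<times> F m)"
proof (rule set_eqI, rule iffI)
  fix xs assume xs: "xs \<in> dep_lists F (Suc m)"
  then obtain ys y where xs_eq: "xs = ys @ [y]" by (metis (mono_tags) length_Suc_conv_rev mem_Collect_eq)
  with xs have "ys \<in> dep_lists F m" "y \<in> F m"
    by (auto simp: nth_append) (metis less_Suc_eq nth_append)+
  with xs_eq show "xs \<in> (\<lambda>(xs, x). xs @ [x]) ` (dep_lists F m \<times> F m)" by auto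
qed (auto simp: nth_append less_Suc_eq)

lemma dep_lists_finite_card:
  assumes fin: "\<And>j. finite (F j)"
  shows "finite (dep_lists F m) \<and> card (dep_lists F m) = (\<Prod>j<m. card (F j))"
proof (induction m)
  case 0
  have "dep_lists F 0 = {[]}" by auto
  then show ?case by simp
next
  case (Suc m)
  have "inj_on (\<lambda>(xs, x). xs @ [x]) (dep_lists F m \<times> F m)" by (auto simp: inj_on_def)
  then show ?case
    using Suc fin[of m] by (simp add: dep_lists_snoc card_image card_cartesian_product)
qed

text \<open>Splitting the capacity bound: below the threshold i0 the storage term alpha is
  the minimum, from i0 on the download term is.  The threshold always exists because
  the download terms decrease in i.\<close>
lemma cut_sum_split:
  fixes b k d \<alpha> \<beta> :: nat
  assumes "b \<le> k" and "k \<le> d"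
  obtains i0 where "b \<le> i0" "i0 \<le> k"
    "(\<Sum>i = b+1..k. min ((d-i+1)*\<beta>) \<alpha>) = \<alpha>*(i0-b) + (\<Sum>j<k-i0. \<beta>*(d-(i0+j)))"
proof -
  define P where "P = (\<lambda>i. b \<le> i \<and> (i = k \<or> (d - i) * \<beta> \<le> \<alpha>))"
  define i0 where "i0 = (LEAST i. P i)"
  have Pk: "P k" using assms by (simp add: P_def)
  have Pi0: "P i0" unfolding i0_def using Pk by (rule LeastI)
  have i0k: "i0 \<le> k" unfolding i0_def using Pk by (rule Least_le)
  have bi0: "b \<le> i0" using Pi0 by (simp add: P_def)
  have low: "min ((d-i)*\<beta>) \<alpha> = \<alpha>" if "b \<le> i" "i < i0" for i
    using not_less_Least[of i P] that by (simp add: i0_def P_def)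
  have high: "min ((d-i)*\<beta>) \<alpha> = \<beta>*(d-i)" if "i0 \<le> i" "i < k" for i
  proof -
    have "(d-i)*\<beta> \<le> (d-i0)*\<beta>" using that by (intro mult_le_mono1) simp
    moreover have "(d-i0)*\<beta> \<le> \<alpha>" using Pi0 that by (auto simp: P_def)
    ultimately have "(d-i)*\<beta> \<le> \<alpha>" by linarith
    then show ?thesis by (simp add: min_def mult.commute)
  qed
  have "(\<Sum>i = b+1..k. min ((d-i+1)*\<beta>) \<alpha>) = (\<Sum>i = b+1..<k+1. min ((d-i+1)*\<beta>) \<alpha>)"
    by (simp add: atLeastLessThanSuc_atLeastAtMost)
  also have "\<dots> = (\<Sum>i = b..<k. min ((d-(i+1)+1)*\<beta>) \<alpha>)"
    by (rule sum.shift_bounds_nat_ivl)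
  also have "\<dots> = (\<Sum>i = b..<k. min ((d-i)*\<beta>) \<alpha>)"
    using assms(2) by (intro sum.cong refl) (simp add: Suc_diff_Suc)
  also have "\<dots> = (\<Sum>i = b..<i0. min ((d-i)*\<beta>) \<alpha>) + (\<Sum>i = i0..<k. min ((d-i)*\<beta>) \<alpha>)"
    using bi0 i0k by (simp add: sum.atLeastLessThan_concat)
  also have "\<dots> = \<alpha>*(i0-b) + (\<Sum>i = i0..<k. \<beta>*(d-i))"
    using low high by (simp add: mult.commute)
  also have "(\<Sum>i = i0..<k. \<beta>*(d-i)) = (\<Sum>j<k-i0. \<beta>*(d-(i0+j)))"
    by (subst sum.atLeastLessThan_shift_0) (simp add: o_def atLeast0LessThan)
  finally show ?thesis using that bi0 i0k by blast
qed

lemma pmf_seq_append: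
  "pmf_seq (xs @ ys) = bind_pmf (pmf_seq xs) (\<lambda>a. map_pmf (\<lambda>b. a @ b) (pmf_seq ys))"
proof (induction xs)
  case Nil
  have "map_pmf ((@) []) (pmf_seq ys) = pmf_seq ys" by (rule pmf.map_ident_strong) simp
  then show ?case by (simp add: bind_return_pmf)
next
  case (Cons p xs)
  have cons_append: "\<And>x a. ((@) (x # a)) = (\<lambda>b. x # a @ b)" by auto
  show ?case
    using Cons by (simp add: map_bind_pmf bind_map_pmf bind_assoc_pmf pmf.map_comp o_def cons_append)
qed

lemma set_pmf_seq:
  "xs \<in> set_pmf (pmf_seq ps) \<Longrightarrow> length xs = length ps \<and> (\<forall>i<length ps. xs!i \<in> set_pmf (ps!i))"
proof (induction ps arbitrary: xs)
  case Nil then show ?case by simp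
next
  case (Cons p ps)
  then obtain x xs' where "x \<in> set_pmf p" "xs' \<in> set_pmf (pmf_seq ps)" "xs = x # xs'" by auto
  with Cons.IH show ?case by (auto simp: nth_Cons split: nat.splits)
qed

lemma foldl_bind_pmf:
  "foldl (\<lambda>P j. bind_pmf P (f j)) (bind_pmf P0 g) xs =
   bind_pmf P0 (\<lambda>s. foldl (\<lambda>P j. bind_pmf P (f j)) (g s) xs)"
  by (induction xs arbitrary: g) (simp_all add: bind_assoc_pmf)

section \<open>The cut-set attack\<close>

text \<open>Parameters: the scheme S, a symbol sigma0, the number b of silenced nodes, the
  threshold i0 and the number m of repaired slots i0, ..., i0+m-1.\<close>
locale cut_attack =
  fixes S :: dss_scheme and \<sigma>0 n b i0 d m \<alpha> \<beta> :: nat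
  assumes b_i0: "b \<le> i0" and i0md: "i0 + m \<le> d" and dn: "d < n"
begin

definition silencer :: adversary where
  "silencer = \<lparr>eav = {0..<b}, ctl = {0..<b}, amsg = (\<lambda>j h lg. replicate \<beta> \<sigma>0),
          acol = (\<lambda>h lg. replicate \<alpha> \<sigma>0)\<rparr>"

definition sched :: "event list" where
  "sched = map (\<lambda>j. (i0+j, [0..<i0+j] @ [Suc (i0+j)..<Suc d])) [0..<m]"

definition sched_prefix :: "nat \<Rightarrow> event list" where "sched_prefix j = take (Suc j) sched"

text \<open>Messages of the outside helpers (slots beyond i0+j, still holding their initial
  contents c) in repair j, and their collection over the first j repairs.\<close>
definition outside_msgs :: "nat \<Rightarrow> (nat \<Rightarrow> nat list) \<Rightarrow> nat list list pmf" where
  "outside_msgs j c = pmf_seq (map (\<lambda>h. rmsg S (sched_prefix j) h (c h)) [Suc (i0+j)..<Suc d])"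

definition outside_log :: "nat \<Rightarrow> (nat \<Rightarrow> nat list) \<Rightarrow> nat list list list pmf" where
  "outside_log j c = pmf_seq (map (\<lambda>i. outside_msgs i c) [0..<j])"

text \<open>Messages of the inside helpers in repair j, computed from the contents u of the
  nodes b..<i0 and the contents ys of the newcomers so far.\<close>
definition inside_msg :: "nat \<Rightarrow> nat list list \<Rightarrow> nat list list \<Rightarrow> nat \<Rightarrow> nat list pmf" where
  "inside_msg j u ys h = (if h < b then return_pmf (replicate \<beta> \<sigma>0)
     else if h < i0 then rmsg S (sched_prefix j) h (u!(h-b)) else rmsg S (sched_prefix j) h (ys!(h-i0)))"

primrec newcomers :: "nat \<Rightarrow> nat list list \<Rightarrow> nat list list list \<Rightarrow> nat list list pmf" where
  "newcomers 0 u om = return_pmf []"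
| "newcomers (Suc j) u om = bind_pmf (newcomers j u om) (\<lambda>ys.
     bind_pmf (pmf_seq (map (inside_msg j u ys) [0..<i0+j])) (\<lambda>ms1.
       map_pmf (\<lambda>s. ys @ [s]) (rstore S (sched_prefix j) (ms1 @ om!j))))"

definition state_after :: "(nat \<Rightarrow> nat list) \<Rightarrow> obs_log \<Rightarrow> nat list list \<Rightarrow> dss_state" where
  "state_after c lg ys = ((\<lambda>x. if n \<le> x \<and> x < n + length ys then ys!(x-n) else c x),
     (\<lambda>s. if i0 \<le> s \<and> s < i0 + length ys then n + (s-i0) else s), lg)"

definition repairs :: "nat \<Rightarrow> (nat \<Rightarrow> nat list) \<Rightarrow> obs_log \<Rightarrow> dss_state pmf" where
  "repairs j c lg = foldl (\<lambda>P j. bind_pmf P (repair_step S silencer n sched j)) (return_pmf (c, id, lg)) [0..<j]"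

definition collector_view :: "nat list list \<Rightarrow> nat list list \<Rightarrow> nat list list" where
  "collector_view u ys = map (\<lambda>h. if h < b then replicate \<alpha> \<sigma>0 else if h < i0 then u!(h-b) else ys!(h-i0)) [0..<i0+m]"

definition transcript :: "nat list \<Rightarrow> (nat list list \<times> nat list list list) pmf" where
  "transcript w = bind_pmf (enc S w) (\<lambda>c. map_pmf (\<lambda>om. (map c [b..<i0], om)) (outside_log m c))"

definition reconstruct :: "nat list list \<times> nat list list list \<Rightarrow> nat list list pmf" where
  "reconstruct = (\<lambda>(u, om). map_pmf (collector_view u) (newcomers m u om))"

definition transcript_space :: "nat set \<Rightarrow> (nat list list \<times> nat list list list) set" where
  "transcript_space \<Sigma> =
     {u. set u \<subseteq> {x. set x \<subseteq> \<Sigma> \<and> length x = \<alpha>} \<and> length u = i0 - b} \<times>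
     dep_lists (\<lambda>j. {y. set y \<subseteq> {x. set x \<subseteq> \<Sigma> \<and> length x = \<beta>} \<and> length y = d - (i0+j)}) m"

definition cut_value :: nat where
  "cut_value = \<alpha>*(i0-b) + (\<Sum>j<m. \<beta>*(d-(i0+j)))"

lemma transcript_space_finite_card:
  assumes fin: "finite \<Sigma>"
  shows "finite (transcript_space \<Sigma>)" "card (transcript_space \<Sigma>) = card \<Sigma> ^ cut_value"
proof -
  define F where "F = (\<lambda>j. {y. set y \<subseteq> {x. set x \<subseteq> \<Sigma> \<and> length x = \<beta>} \<and> length y = d - (i0+j)})"
  have F: "finite (F j)" "card (F j) = card \<Sigma> ^ (\<beta>*(d-(i0+j)))" for j
    using fin by (simp_all add: F_def finite_lists_length_eq card_lists_length_eq power_mult)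
  define U where "U = {u. set u \<subseteq> {x. set x \<subseteq> \<Sigma> \<and> length x = \<alpha>} \<and> length u = i0 - b}"
  have U: "finite U" "card U = card \<Sigma> ^ (\<alpha>*(i0-b))"
    using fin by (simp_all add: U_def finite_lists_length_eq card_lists_length_eq power_mult)
  have space: "transcript_space \<Sigma> = U \<times> dep_lists F m"
    by (simp add: transcript_space_def U_def F_def)
  show "finite (transcript_space \<Sigma>)" "card (transcript_space \<Sigma>) = card \<Sigma> ^ cut_value"
    using dep_lists_finite_card[of F m, OF F(1)] U unfolding space
    by (simp_all add: card_cartesian_product F(2) power_sum power_add cut_value_def)
qed

lemma newcomers_len: "ys \<in> set_pmf (newcomers j u om) \<Longrightarrow> length ys = j"
  by (induction j arbitrary: ys) auto

lemma newcomers_cong: "(\<forall>i<j. om!i = om'!i) \<Longrightarrow> newcomers j u om = newcomers j u om'"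
  by (induction j) auto

lemma outside_log_len: "om \<in> set_pmf (outside_log j c) \<Longrightarrow> length om = j"
  using set_pmf_seq unfolding outside_log_def by fastforce

lemma outside_log_Suc: "outside_log (Suc j) c = bind_pmf (outside_log j c) (\<lambda>om. map_pmf (\<lambda>x. om @ [x]) (outside_msgs j c))"
proof -
  have "pmf_seq [outside_msgs j c] = map_pmf (\<lambda>x. [x]) (outside_msgs j c)"
    by (simp add: map_pmf_def bind_return_pmf)
  then show ?thesis by (simp add: outside_log_def pmf_seq_append map_pmf_comp)
qed

lemma sched_nth: "j < m \<Longrightarrow> sched ! j = (i0+j, [0..<i0+j] @ [Suc (i0+j)..<Suc d])"
  unfolding sched_def by simp

lemma repair_step_state_after:
  assumes j: "j < m" and ys: "length ys = j"
  shows "repair_step S silencer n sched j (state_after c lg ys) =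
    bind_pmf (pmf_seq (map (inside_msg j (map c [b..<i0]) ys) [0..<i0+j])) (\<lambda>ms1.
      bind_pmf (outside_msgs j c) (\<lambda>x. map_pmf (\<lambda>s. state_after c lg (ys @ [s])) (rstore S (sched_prefix j) (ms1 @ x))))"
proof -
  obtain C' O' where st: "state_after c lg ys = (C', O', lg)"
    and C': "C' = (\<lambda>x. if n \<le> x \<and> x < n + length ys then ys!(x-n) else c x)"
    and O': "O' = (\<lambda>s. if i0 \<le> s \<and> s < i0 + length ys then n + (s-i0) else s)"
    by (simp add: state_after_def)
  have inside: "map (helper_msg S silencer sched j (C', O', lg)) [0..<i0+j] = map (inside_msg j (map c [b..<i0]) ys) [0..<i0+j]"
    using ys b_i0 i0md dn j
    by (intro map_cong refl) (auto simp: helper_msg_def C' O' inside_msg_def silencer_def sched_prefix_def)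
  have outside: "map (helper_msg S silencer sched j (C', O', lg)) [Suc (i0+j)..<Suc d] =
            map (\<lambda>h. rmsg S (sched_prefix j) h (c h)) [Suc (i0+j)..<Suc d]"
    using ys b_i0 i0md dn j
    by (intro map_cong refl) (auto simp: helper_msg_def C' O' silencer_def sched_prefix_def)
  have new_state: "\<And>s. (C'(n + j := s), O'(i0 + j := n + j), lg) = state_after c lg (ys @ [s])"
    using ys by (auto simp: C' O' state_after_def fun_eq_iff nth_append)
  have "n + j \<notin> eav silencer" using b_i0 i0md dn by (simp add: silencer_def)
  then have "repair_step S silencer n sched j (C', O', lg) = bind_pmf (pmf_seq (map (helper_msg S silencer sched j (C', O', lg))
       ([0..<i0+j] @ [Suc (i0+j)..<Suc d]))) (\<lambda>ms. map_pmf (\<lambda>s. (C'(n+j:=s), O'(i0+j := n+j), lg))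
       (rstore S (sched_prefix j) ms))"
    unfolding repair_step_def by (simp add: sched_nth[OF j] sched_prefix_def del: upt_Suc)
  then show ?thesis
    unfolding st map_append pmf_seq_append inside outside outside_msgs_def[symmetric] new_state
    by (simp add: bind_map_pmf bind_assoc_pmf del: upt_Suc)
qed

text \<open>After j repairs the state is state_after of the newcomers generated by newcomers from the
  outside messages outside_log: the outside messages can be drawn up front, since they only
  depend on the initial contents c.\<close>
lemma repairs_eq: "j \<le> m \<Longrightarrow> repairs j c lg =
   bind_pmf (outside_log j c) (\<lambda>om. map_pmf (state_after c lg) (newcomers j (map c [b..<i0]) om))"
proof (induction j)
  case 0
  have "state_after c lg [] = (c, id, lg)" by (auto simp: state_after_def fun_eq_iff)
  then show ?case by (simp add: repairs_def outside_log_def bind_return_pmf)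
next
  case (Suc j)
  then have j: "j < m" by simp
  define u where "u = map c [b..<i0]"
  define M1 where "M1 = (\<lambda>ys. pmf_seq (map (inside_msg j u ys) [0..<i0+j]))"
  have "repairs (Suc j) c lg = bind_pmf (repairs j c lg) (repair_step S silencer n sched j)"
    by (simp add: repairs_def)
  also have "\<dots> = bind_pmf (outside_log j c) (\<lambda>om. bind_pmf (newcomers j u om) (\<lambda>ys. bind_pmf (M1 ys) (\<lambda>ms1.
      bind_pmf (outside_msgs j c) (\<lambda>x. map_pmf (\<lambda>s. state_after c lg (ys @ [s])) (rstore S (sched_prefix j) (ms1 @ x))))))"
    using Suc j by (simp add: u_def M1_def bind_map_pmf bind_assoc_pmf repair_step_state_after newcomers_len cong: bind_pmf_cong)
  also have "\<dots> = bind_pmf (outside_log j c) (\<lambda>om. bind_pmf (outside_msgs j c) (\<lambda>x. bind_pmf (newcomers j u om) (\<lambda>ys. bind_pmf (M1 ys) (\<lambda>ms1.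
      map_pmf (\<lambda>s. state_after c lg (ys @ [s])) (rstore S (sched_prefix j) (ms1 @ x))))))"
    by (simp add: bind_commute_pmf[of "outside_msgs j c"])
  also have "\<dots> = bind_pmf (outside_log j c) (\<lambda>om. bind_pmf (outside_msgs j c) (\<lambda>x. map_pmf (state_after c lg) (newcomers (Suc j) u (om @ [x]))))"
  proof (intro bind_pmf_cong refl)
    fix om x assume "om \<in> set_pmf (outside_log j c)"
    then have l: "length om = j" by (rule outside_log_len)
    then have "newcomers j u (om @ [x]) = newcomers j u om" by (intro newcomers_cong) (simp add: nth_append)
    moreover have "(om @ [x]) ! j = x" using l nth_append_length by metis
    ultimately show "bind_pmf (newcomers j u om) (\<lambda>ys. bind_pmf (M1 ys) (\<lambda>ms1.
      map_pmf (\<lambda>s. state_after c lg (ys @ [s])) (rstore S (sched_prefix j) (ms1 @ x)))) =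
      map_pmf (state_after c lg) (newcomers (Suc j) u (om @ [x]))"
      by (simp add: M1_def map_bind_pmf pmf.map_comp o_def)
  qed
  also have "\<dots> = bind_pmf (outside_log (Suc j) c) (\<lambda>om. map_pmf (state_after c lg) (newcomers (Suc j) u om))"
    by (simp add: outside_log_Suc bind_map_pmf bind_assoc_pmf)
  finally show ?case by (simp add: u_def)
qed

lemma collected_state_after:
  assumes "length ys = m"
  shows "collected silencer [0..<i0+m] (state_after c lg ys) = collector_view (map c [b..<i0]) ys"
  unfolding collected_def state_after_def collector_view_def prod.case
  by (rule map_cong[OF refl]) (use b_i0 i0md dn assms in \<open>auto simp: silencer_def\<close>)

lemma view_factors:
  "map_pmf (collected silencer [0..<i0+m]) (run_dss S silencer n sched w) = bind_pmf (transcript w) reconstruct"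
proof -
  have len: "length sched = m" by (simp add: sched_def)
  define L where "L = (\<lambda>c::nat \<Rightarrow> nat list. map (\<lambda>i. (i, [c i])) (filter (\<lambda>i. i \<in> eav silencer) [0..<n]))"
  have init: "init_state S silencer n w = bind_pmf (enc S w) (\<lambda>c. return_pmf (c, id, L c))"
    by (simp add: init_state_def map_pmf_def L_def)
  have run: "run_dss S silencer n sched w = bind_pmf (enc S w) (\<lambda>c. repairs m c (L c))"
    unfolding run_dss_def init len foldl_bind_pmf repairs_def ..
  have "bind_pmf (transcript w) reconstruct = bind_pmf (enc S w) (\<lambda>c.
      bind_pmf (outside_log m c) (\<lambda>om. map_pmf (collector_view (map c [b..<i0])) (newcomers m (map c [b..<i0]) om)))"
    by (simp add: transcript_def reconstruct_def bind_assoc_pmf bind_map_pmf)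
  then show ?thesis
    unfolding run repairs_eq[OF order.refl] map_bind_pmf pmf.map_comp
    by (simp add: o_def collected_state_after newcomers_len cong: bind_pmf_cong pmf.map_cong)
qed

lemma transcript_support:
  assumes vs: "valid_scheme n \<alpha> \<beta> \<Sigma> S"
  shows "set_pmf (transcript w) \<subseteq> transcript_space \<Sigma>"
proof
  fix t assume "t \<in> set_pmf (transcript w)"
  then obtain c om where c: "c \<in> set_pmf (enc S w)" and om: "om \<in> set_pmf (outside_log m c)"
    and t: "t = (map c [b..<i0], om)" by (auto simp: transcript_def)
  have content: "set (c h) \<subseteq> \<Sigma> \<and> length (c h) = \<alpha>" if "h < n" for h
    using vs c that unfolding valid_scheme_def by blast
  from set_pmf_seq[OF om[unfolded outside_log_def]]
  have l: "length om = m" and e: "\<forall>j<m. om!j \<in> set_pmf (outside_msgs j c)" by auto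
  have "length (om!j) = d - (i0+j) \<and> set (om!j) \<subseteq> {x. set x \<subseteq> \<Sigma> \<and> length x = \<beta>}" if j: "j < m" for j
  proof -
    from set_pmf_seq[OF e[rule_format, OF j, unfolded outside_msgs_def]]
    have len: "length (om!j) = d - (i0+j)"
      and msg: "\<forall>i<length (om!j). \<exists>h. (om!j)!i \<in> set_pmf (rmsg S (sched_prefix j) h (c h))"
      by (auto simp del: upt_Suc)
    have "set (om!j) \<subseteq> {x. set x \<subseteq> \<Sigma> \<and> length x = \<beta>}"
    proof
      fix x assume "x \<in> set (om!j)"
      then obtain i where "i < length (om!j)" "x = (om!j)!i" by (auto simp: in_set_conv_nth)
      then show "x \<in> {x. set x \<subseteq> \<Sigma> \<and> length x = \<beta>}"
        using msg vs unfolding valid_scheme_def by blast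
    qed
    with len show ?thesis by simp
  qed
  moreover have "i0 < n" using i0md dn by linarith
  ultimately show "t \<in> transcript_space \<Sigma>"
    using content l by (auto simp: t transcript_space_def) (meson less_trans subsetD)
qed

lemma attack_error_lower_bound:
  assumes fin: "finite \<Sigma>" and \<sigma>0: "\<sigma>0 \<in> \<Sigma>" and vs: "valid_scheme n \<alpha> \<beta> \<Sigma> S"
  shows "1 - real (card \<Sigma> ^ cut_value) / real (card \<Sigma> ^ B) \<le> error_prob S silencer n \<Sigma> B sched [0..<i0+m]"
proof -
  define N where "N = {w. set w \<subseteq> \<Sigma> \<and> length w = B}"
  have N: "finite N" "card N = card \<Sigma> ^ B"
    using fin by (simp_all add: N_def finite_lists_length_eq card_lists_length_eq)
  have "replicate B \<sigma>0 \<in> N" using \<sigma>0 by (auto simp: N_def)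
  then have "N \<noteq> {}" by blast
  have decode: "bind_pmf (run_dss S silencer n sched w) (\<lambda>st. map_pmf (\<lambda>est. est \<noteq> w)
                  (dec S sched [0..<i0+m] (collected silencer [0..<i0+m] st))) =
                bind_pmf (bind_pmf (transcript w) reconstruct)
                  (\<lambda>v. map_pmf (\<lambda>e. e \<noteq> w) (dec S sched [0..<i0+m] v))" for w
    by (simp add: view_factors[symmetric] bind_map_pmf)
  have "1 - real (card (transcript_space \<Sigma>)) / real (card N) \<le> error_prob S silencer n \<Sigma> B sched [0..<i0+m]"
    unfolding error_prob_def N_def[symmetric] decode
    by (rule guessing_error_lower_bound[OF N(1) \<open>N \<noteq> {}\<close> transcript_space_finite_card(1)[OF fin]
          transcript_support[OF vs] refl])
  with N show ?thesis by (simp add: transcript_space_finite_card(2)[OF fin])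
qed

lemma attack_admissible:
  assumes "b \<le> l" and "\<sigma>0 \<in> \<Sigma>"
  shows "valid_schedule n d sched" "valid_collector n (i0+m) [0..<i0+m]"
    "valid_adversary l b \<alpha> \<beta> \<Sigma> silencer"
  using assms i0md dn
  by (auto simp: valid_schedule_def sched_def valid_collector_def valid_adversary_def silencer_def)

end

text \<open>Once |Sigma| \<ge> 2 and B > C, the decoding error against the attack is at least
  1/2, so no file size above the cut value is resiliently achievable.\<close>
lemma resilient_achievable_le_cut:
  fixes n k d l b \<alpha> \<beta> i0 B :: nat
  assumes "b \<le> l" "b \<le> i0" "i0 \<le> k" "k \<le> d" "d < n"
    and ach: "resilient_achievable n k d l b \<alpha> \<beta> B"
  shows "B \<le> \<alpha>*(i0-b) + (\<Sum>j<k-i0. \<beta>*(d-(i0+j)))"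
proof (rule ccontr)
  define C where "C = \<alpha>*(i0-b) + (\<Sum>j<k-i0. \<beta>*(d-(i0+j)))"
  assume "\<not> B \<le> \<alpha>*(i0-b) + (\<Sum>j<k-i0. \<beta>*(d-(i0+j)))"
  then have CB: "C < B" by (simp add: C_def)
  obtain \<Sigma> S where fin: "finite \<Sigma>" and two: "2 \<le> card \<Sigma>" and vs: "valid_scheme n \<alpha> \<beta> \<Sigma> S"
    and small: "\<And>sched K A. valid_schedule n d sched \<Longrightarrow> valid_collector n k K \<Longrightarrow>
            valid_adversary l b \<alpha> \<beta> \<Sigma> A \<Longrightarrow> error_prob S A n \<Sigma> B sched K \<le> 1/4"
    using ach unfolding resilient_achievable_def by (meson zero_less_divide_1_iff zero_less_numeral)
  obtain \<sigma>0 where \<sigma>0: "\<sigma>0 \<in> \<Sigma>" using two by fastforce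
  interpret cut_attack S \<sigma>0 n b i0 d "k - i0" \<alpha> \<beta>
    using assms by unfold_locales auto
  have k: "i0 + (k - i0) = k" using \<open>i0 \<le> k\<close> by simp
  note admissible = attack_admissible[OF \<open>b \<le> l\<close> \<sigma>0, unfolded k]
  have error: "1 - real (card \<Sigma> ^ C) / real (card \<Sigma> ^ B) \<le> 1/4"
    using attack_error_lower_bound[OF fin \<sigma>0 vs, of B, unfolded k] small[OF admissible]
    by (simp add: cut_value_def C_def)
  have "card \<Sigma> ^ C * 2 \<le> card \<Sigma> ^ B"
  proof -
    have "card \<Sigma> \<le> card \<Sigma> ^ (B - C)"
      by (rule self_le_power) (use two CB in auto)
    with two have "2 \<le> card \<Sigma> ^ (B - C)" by linarith
    moreover have "card \<Sigma> ^ B = card \<Sigma> ^ C * card \<Sigma> ^ (B - C)"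
      using CB by (simp add: power_add[symmetric])
    ultimately show ?thesis by simp
  qed
  then have "real (card \<Sigma> ^ C) * 2 \<le> real (card \<Sigma> ^ B)"
    by (metis of_nat_le_iff of_nat_mult of_nat_numeral)
  moreover have "0 < card \<Sigma> ^ B" using two by simp
  ultimately have "real (card \<Sigma> ^ C) / real (card \<Sigma> ^ B) \<le> 1/2"
    by (simp add: divide_le_eq)
  with error show False by linarith
qed

theorem theorem5:
  fixes n k d l b \<alpha> \<beta> :: nat
  assumes "k \<le> d" and "d \<le> n - 1" and "l < k" and "b \<le> l"
  shows "resiliency_capacity n k d l b \<alpha> \<beta>
           \<le> enat (\<Sum>i = b + 1..k. min ((d - i + 1) * \<beta>) \<alpha>)"
proof -
  obtain i0 where i0: "b \<le> i0" "i0 \<le> k"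
    and split: "(\<Sum>i = b+1..k. min ((d-i+1)*\<beta>) \<alpha>) = \<alpha>*(i0-b) + (\<Sum>j<k-i0. \<beta>*(d-(i0+j)))"
    using cut_sum_split[of b k d \<beta> \<alpha>] assms by auto
  have "d < n" using assms by linarith
  then have bound: "B \<le> (\<Sum>i = b+1..k. min ((d-i+1)*\<beta>) \<alpha>)"
    if "resilient_achievable n k d l b \<alpha> \<beta> B" for B
    unfolding split using resilient_achievable_le_cut[OF \<open>b \<le> l\<close> i0 \<open>k \<le> d\<close>] that by blast
  show ?thesis
    unfolding resiliency_capacity_def by (rule Sup_least) (auto dest: bound)
qed

end
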